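(* Let $S\in Sp(4n,\mathbb{R})$ be such that \begin{equation*} S\begin{pmatrix} \varGamma & 0 \\ 0 & \varGamma \end{pmatrix}S^{T}=\begin{pmatrix} \cdot & 0 \\ 0 & * \end{pmatrix} \quad \text{for all covariance matrices}\quad\varGamma\in\mathbb{R}^{2n\times 2n}, \end{equation*} where $*,\cdot$ denote arbitrary covariance matrices in $\mathbb{R}^{2n\times 2n}$ (i.e. the output is block diagonal with $2n\times 2n$ blocks). Then \begin{equation*} \begin{split} S&= \begin{pmatrix} X & 0 \\ 0 & Y \end{pmatrix}\frac{1}{\sqrt{1+\alpha^{2}}} \begin{pmatrix} \mathbb{1}_{2n} & \alpha\mathbb{1}_{2n}\\ -\alpha\mathbb{1}_{2n} & \mathbb{1}_{2n} \end{pmatrix} \quad\text{or}\quad S= \begin{pmatrix} 0 & X \\ Y & 0 \end{pmatrix}\frac{1}{\sqrt{1+\gamma^{2}}} \begin{pmatrix} \mathbb{1}_{2n} & -\gamma\mathbb{1}_{2n}\\ \gamma\mathbb{1}_{2n} & \mathbb{1}_{2n} \end{pmatrix}, \end{split} \end{equation*} where $X,Y\in Sp(2n,\mathbb{R})$, $\alpha,\gamma\in\mathbb{R}\cup\{\pm\infty\}$, and $\mathbb{1}_{2n}$ is the $2n\times 2n$ identity matrix.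
   Context: Setting: $n$-mode (and $2n$-mode) bosonic continuous-variable systems with canonical operators $R=(Q_1,P_1,\ldots,Q_n,P_n)$ satisfying $[R_k,R_l]=i\sigma_{kl}$, where $\sigma=\bigoplus_{i=1}^{n}\begin{pmatrix}0&1\\-1&0\end{pmatrix}$. $Sp(2m,\mathbb{R})$ denotes the group of real $2m\times 2m$ matrices $S$ with $S\sigma S^{T}=\sigma$ (with $\sigma$ the symplectic form of the appropriate size). A covariance matrix (CM) of an $n$-mode state is a real symmetric $2n\times 2n$ matrix $\varGamma$ with entries $\varGamma_{kl}=\mathrm{Tr}[\rho\{R_k-d_k,R_l-d_l\}]$, and genuine quantum CMs satisfy $\varGamma+i\sigma\geq 0$. A symplectic $S$ acts on a CM by $\varGamma\mapsto S\varGamma S^T$. *)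

theory Defs
  imports Complex_Main "HOL-Library.Extended_Real" "Jordan_Normal_Form.Matrix" "Jordan_Normal_Form.Conjugate"
begin

text \<open>Symplectic form sigma for m modes: direct sum of m copies of [[0,1],[-1,0]] (size 2m).\<close>
definition sympl_form :: "nat \<Rightarrow> real mat" where
  "sympl_form m = mat (2*m) (2*m) (\<lambda>(i,j).
      if even i \<and> j = i + 1 then 1 else if odd i \<and> j + 1 = i then -1 else 0)"

definition symplectic :: "nat \<Rightarrow> real mat \<Rightarrow> bool" where
  "symplectic m S \<longleftrightarrow> S \<in> carrier_mat (2*m) (2*m) \<and>
     S * sympl_form m * transpose_mat S = sympl_form m"

definition cpsd :: "nat \<Rightarrow> complex mat \<Rightarrow> bool" where
  "cpsd k M \<longleftrightarrow> M \<in> carrier_mat k k \<and>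
     (\<forall>v \<in> carrier_vec k. Im (conjugate v \<bullet> (M *\<^sub>v v)) = 0 \<and>
                          Re (conjugate v \<bullet> (M *\<^sub>v v)) \<ge> 0)"

definition cov_mat :: "nat \<Rightarrow> real mat \<Rightarrow> bool" where
  "cov_mat n G \<longleftrightarrow> G \<in> carrier_mat (2*n) (2*n) \<and> transpose_mat G = G \<and>
     cpsd (2*n) (map_mat complex_of_real G + smult_mat \<i> (map_mat complex_of_real (sympl_form n)))"

text \<open>The matrix (1/sqrt(1+a^2)) [[1, a 1],[-a 1, 1]] (blocks of size 2n),
  with a = +-infinity understood as the limit [[0, +-1],[-+1, 0]].\<close>
definition mixA :: "nat \<Rightarrow> ereal \<Rightarrow> real mat" where
  "mixA n a = (case a of
      ereal x \<Rightarrow> smult_mat (1 / sqrt (1 + x^2))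
                  (four_block_mat (1\<^sub>m (2*n)) (smult_mat x (1\<^sub>m (2*n)))
                                  (smult_mat (-x) (1\<^sub>m (2*n))) (1\<^sub>m (2*n)))
    | PInfty \<Rightarrow> four_block_mat (0\<^sub>m (2*n) (2*n)) (1\<^sub>m (2*n)) (smult_mat (-1) (1\<^sub>m (2*n))) (0\<^sub>m (2*n) (2*n))
    | MInfty \<Rightarrow> four_block_mat (0\<^sub>m (2*n) (2*n)) (smult_mat (-1) (1\<^sub>m (2*n))) (1\<^sub>m (2*n)) (0\<^sub>m (2*n) (2*n)))"

text \<open>The matrix (1/sqrt(1+g^2)) [[1, -g 1],[g 1, 1]], with g = +-infinity as the limit.\<close>
definition mixB :: "nat \<Rightarrow> ereal \<Rightarrow> real mat" where
  "mixB n g = (case g of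
      ereal x \<Rightarrow> smult_mat (1 / sqrt (1 + x^2))
                  (four_block_mat (1\<^sub>m (2*n)) (smult_mat (-x) (1\<^sub>m (2*n)))
                                  (smult_mat x (1\<^sub>m (2*n))) (1\<^sub>m (2*n)))
    | PInfty \<Rightarrow> four_block_mat (0\<^sub>m (2*n) (2*n)) (smult_mat (-1) (1\<^sub>m (2*n))) (1\<^sub>m (2*n)) (0\<^sub>m (2*n) (2*n))
    | MInfty \<Rightarrow> four_block_mat (0\<^sub>m (2*n) (2*n)) (1\<^sub>m (2*n)) (smult_mat (-1) (1\<^sub>m (2*n))) (0\<^sub>m (2*n) (2*n)))"

end

theory Submission
  imports Defs "Jordan_Normal_Form.Determinant"
begin

text \<open>
  Write \<open>S = [[A, B], [C, D]]\<close> with \<open>2n \<times> 2n\<close> blocks. The off-diagonal block of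
  \<open>S diag(G, G) S\<^sup>T\<close> is \<open>A G C\<^sup>T + B G D\<^sup>T\<close>, which is linear in \<open>G\<close>; since \<open>t 1\<close> and
  \<open>t 1 + e\<^sub>k e\<^sub>l\<^sup>T + e\<^sub>l e\<^sub>k\<^sup>T\<close> are covariance matrices for large \<open>t\<close>, it vanishes on
  \<open>e\<^sub>k e\<^sub>l\<^sup>T + e\<^sub>l e\<^sub>k\<^sup>T\<close>. For the plane vectors \<open>u\<^sub>i\<^sub>k = (A\<^sub>i\<^sub>k, B\<^sub>i\<^sub>k)\<close> and
  \<open>v\<^sub>j\<^sub>k = (C\<^sub>j\<^sub>k, D\<^sub>j\<^sub>k)\<close> this reads \<open>\<langle>u\<^sub>i\<^sub>k, v\<^sub>j\<^sub>l\<rangle> + \<langle>u\<^sub>i\<^sub>l, v\<^sub>j\<^sub>k\<rangle> = 0\<close>.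
  As \<open>S\<close> is invertible, for each column \<open>k\<close> the \<open>u\<^sub>i\<^sub>k\<close> span a line and the \<open>v\<^sub>j\<^sub>k\<close> span
  its orthogonal complement, and the lines of all columns coincide: otherwise column \<open>l\<close> of \<open>S\<close>
  would be a combination of columns \<open>k\<close> and \<open>k + 2n\<close>. A unit vector \<open>(c, s)\<close> on the common line
  gives \<open>A = c X\<close>, \<open>B = s X\<close>, \<open>C = -s Y\<close>, \<open>D = c Y\<close>, that is \<open>S = diag(X, Y) R\<close> with the rotation
  \<open>R = [[c, s], [-s, c]] \<otimes> 1\<close>, and the diagonal blocks of \<open>S J S\<^sup>T = J\<close> force \<open>X\<close> and \<open>Y\<close>
  to be symplectic. With \<open>c \<ge> 0\<close> the rotation is \<^const>\<open>mixA\<close>, so the first alternative of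
  the theorem always holds.
\<close>

section \<open>Symplectic matrices\<close>

lemma sympl_form_dim [simp]: "dim_row (sympl_form m) = 2*m" "dim_col (sympl_form m) = 2*m"
  by (simp_all add: sympl_form_def)

lemma sympl_form_carrier [simp]: "sympl_form m \<in> carrier_mat (2*m) (2*m)"
  by (simp add: sympl_form_def)

lemma sympl_form_index:
  "i < 2*m \<Longrightarrow> j < 2*m \<Longrightarrow> sympl_form m $$ (i,j) =
     (if even i \<and> j = i + 1 then 1 else if odd i \<and> j + 1 = i then -1 else 0)"
  by (simp add: sympl_form_def)

lemma sympl_form_double:
  "sympl_form (2*n) = four_block_mat (sympl_form n) (0\<^sub>m (2*n) (2*n)) (0\<^sub>m (2*n) (2*n)) (sympl_form n)"
  by (rule eq_matI) (auto simp: sympl_form_def, presburger+)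

lemma sympl_form_square: "sympl_form m * sympl_form m = - 1\<^sub>m (2*m)"
proof (rule eq_matI)
  fix i j assume "i < dim_row (- 1\<^sub>m (2*m))" and "j < dim_col (- 1\<^sub>m (2*m))"
  hence i: "i < 2*m" and j: "j < 2*m" by auto
  define i' where "i' = (if even i then i + 1 else i - 1)"
  have i': "i' < 2*m" using i unfolding i'_def by presburger
  have "(sympl_form m * sympl_form m) $$ (i,j) = (\<Sum>k\<in>{0..<2*m}. sympl_form m $$ (i,k) * sympl_form m $$ (k,j))"
    using i j by (simp add: scalar_prod_def)
  also have "\<dots> = (\<Sum>k\<in>{0..<2*m}. if k = i' then sympl_form m $$ (i,i') * sympl_form m $$ (i',j) else 0)"
    using i j unfolding i'_def by (intro sum.cong) (auto simp: sympl_form_index)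
  also have "\<dots> = (- 1\<^sub>m (2*m)) $$ (i,j)"
    using i j i' unfolding i'_def by (auto simp: sympl_form_index)
  finally show "(sympl_form m * sympl_form m) $$ (i,j) = (- 1\<^sub>m (2*m)) $$ (i,j)" .
qed (auto simp: sympl_form_def)

lemma symplectic_inverse:
  assumes "symplectic m S"
  obtains T where "T \<in> carrier_mat (2*m) (2*m)" "S * T = 1\<^sub>m (2*m)" "T * S = 1\<^sub>m (2*m)"
proof
  let ?J = "sympl_form m"
  define T where "T = - (?J * transpose_mat S * ?J)"
  have S: "S \<in> carrier_mat (2*m) (2*m)" and SJS: "S * ?J * transpose_mat S = ?J"
    using assms unfolding symplectic_def by auto
  have J: "?J \<in> carrier_mat (2*m) (2*m)" and St: "transpose_mat S \<in> carrier_mat (2*m) (2*m)"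
    using S by auto
  show T: "T \<in> carrier_mat (2*m) (2*m)" using S unfolding T_def carrier_mat_def by simp
  have assoc: "S * (?J * transpose_mat S * ?J) = (S * ?J * transpose_mat S) * ?J"
    unfolding assoc_mult_mat[OF J St J] assoc_mult_mat[OF mult_carrier_mat[OF S J] St J]
      assoc_mult_mat[OF S J mult_carrier_mat[OF St J]] ..
  have "S * T = - ((S * ?J * transpose_mat S) * ?J)" unfolding T_def assoc[symmetric] using S by simp
  also have "\<dots> = 1\<^sub>m (2*m)" unfolding SJS sympl_form_square by simp
  finally show ST: "S * T = 1\<^sub>m (2*m)" .
  show "T * S = 1\<^sub>m (2*m)" by (rule mat_mult_left_right_inverse[OF S T ST])
qed

lemma symplectic_mult_vec_eq_zero:
  assumes "symplectic m S" and v: "v \<in> carrier_vec (2*m)" and Sv: "S *\<^sub>v v = 0\<^sub>v (2*m)"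
  shows "v = 0\<^sub>v (2*m)"
proof -
  obtain T where T: "T \<in> carrier_mat (2*m) (2*m)" and TS: "T * S = 1\<^sub>m (2*m)"
    using symplectic_inverse[OF assms(1)] by blast
  have S: "S \<in> carrier_mat (2*m) (2*m)" using assms(1) unfolding symplectic_def by simp
  have "v = (T * S) *\<^sub>v v" using TS v by simp
  also have "\<dots> = T *\<^sub>v (S *\<^sub>v v)" using T S v by simp
  also have "\<dots> = 0\<^sub>v (2*m)" unfolding Sv using T by (intro eq_vecI) auto
  finally show ?thesis .
qed

lemma symplectic_row_nonzero:
  assumes "symplectic m S" and r: "r < 2*m"
  shows "\<exists>u<2*m. S $$ (r,u) \<noteq> 0"
proof (rule ccontr)
  obtain T where T: "T \<in> carrier_mat (2*m) (2*m)" and ST: "S * T = 1\<^sub>m (2*m)"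
    using symplectic_inverse[OF assms(1)] by blast
  have S: "S \<in> carrier_mat (2*m) (2*m)" using assms(1) unfolding symplectic_def by simp
  assume "\<not> (\<exists>u<2*m. S $$ (r,u) \<noteq> 0)"
  hence "(S * T) $$ (r,r) = 0" using S T r by (simp add: scalar_prod_def)
  thus False using ST r by simp
qed

lemma four_block_congruence:
  fixes A B C D G H :: "'a::comm_ring mat"
  assumes "A \<in> carrier_mat nr1 n1" "B \<in> carrier_mat nr1 n2" "C \<in> carrier_mat nr2 n1" "D \<in> carrier_mat nr2 n2"
    and "G \<in> carrier_mat n1 n1" "H \<in> carrier_mat n2 n2"
  shows "four_block_mat A B C D * four_block_mat G (0\<^sub>m n1 n2) (0\<^sub>m n2 n1) H * transpose_mat (four_block_mat A B C D)
    = four_block_mat (A * G * transpose_mat A + B * H * transpose_mat B) (A * G * transpose_mat C + B * H * transpose_mat D)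
                     (C * G * transpose_mat A + D * H * transpose_mat B) (C * G * transpose_mat C + D * H * transpose_mat D)"
  using assms
  by (simp add: transpose_four_block_mat mult_four_block_mat[of _ nr1 n1 _ n2 _ nr2 _ _ n1 _ n2]
      mult_four_block_mat[of _ nr1 n1 _ n2 _ nr2 _ _ nr1 _ nr2])

lemma four_block_mat_inject:
  assumes "four_block_mat A B C D = four_block_mat A' B' C' D'"
    and "A \<in> carrier_mat nr1 nc1" "B \<in> carrier_mat nr1 nc2" "C \<in> carrier_mat nr2 nc1" "D \<in> carrier_mat nr2 nc2"
    and "A' \<in> carrier_mat nr1 nc1" "B' \<in> carrier_mat nr1 nc2" "C' \<in> carrier_mat nr2 nc1" "D' \<in> carrier_mat nr2 nc2"
  shows "A = A' \<and> B = B' \<and> C = C' \<and> D = D'"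
proof -
  have "split_block (four_block_mat A B C D) nr1 nc1 = (A, B, C, D)"
    using assms(2-5) by (auto simp: split_block_def intro!: eq_matI)
  moreover have "split_block (four_block_mat A' B' C' D') nr1 nc1 = (A', B', C', D')"
    using assms(6-9) by (auto simp: split_block_def intro!: eq_matI)
  ultimately show ?thesis using assms(1) by (metis prod.inject)
qed

lemma symplectic_four_block_rows:
  assumes "symplectic (2*n) (four_block_mat A B C D)"
    and "A \<in> carrier_mat (2*n) (2*n)" "B \<in> carrier_mat (2*n) (2*n)" "C \<in> carrier_mat (2*n) (2*n)" "D \<in> carrier_mat (2*n) (2*n)"
  shows "A * sympl_form n * transpose_mat A + B * sympl_form n * transpose_mat B = sympl_form n"
    and "C * sympl_form n * transpose_mat C + D * sympl_form n * transpose_mat D = sympl_form n"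
proof -
  let ?J = "sympl_form n" and ?O = "0\<^sub>m (2*n) (2*n) :: real mat"
  have eq: "four_block_mat (A * ?J * transpose_mat A + B * ?J * transpose_mat B) (A * ?J * transpose_mat C + B * ?J * transpose_mat D)
                       (C * ?J * transpose_mat A + D * ?J * transpose_mat B) (C * ?J * transpose_mat C + D * ?J * transpose_mat D)
      = four_block_mat ?J ?O ?O ?J"
    using assms(1) four_block_congruence[OF assms(2-5) sympl_form_carrier sympl_form_carrier]
    unfolding symplectic_def sympl_form_double by simp
  have cc: "X * ?J * transpose_mat Y + Z * ?J * transpose_mat W \<in> carrier_mat (2*n) (2*n)"
    if "Z \<in> carrier_mat (2*n) (2*n)" "W \<in> carrier_mat (2*n) (2*n)" for X Y Z W :: "real mat"
    by (intro carrier_matI) (use that in auto)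
  from four_block_mat_inject[OF eq cc cc cc cc, OF assms(3,3,3,5,5,3,5,5) sympl_form_carrier zero_carrier_mat zero_carrier_mat sympl_form_carrier]
  show "A * ?J * transpose_mat A + B * ?J * transpose_mat B = ?J"
    and "C * ?J * transpose_mat C + D * ?J * transpose_mat D = ?J" by simp_all
qed

section \<open>Test covariance matrices\<close>

lemma re_cnj_mult_mult_ge:
  fixes a z b :: complex
  assumes "cmod z \<le> r"
  shows "- r * ((cmod a)\<^sup>2 + (cmod b)\<^sup>2) / 2 \<le> Re (cnj a * z * b)"
proof -
  have "cmod a * cmod b * cmod z \<le> ((cmod a)\<^sup>2 + (cmod b)\<^sup>2) / 2 * r"
    using assms sum_squares_bound[of "cmod a" "cmod b"]
    by (intro mult_mono) (auto simp: power2_eq_square)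
  moreover have "- cmod (cnj a * z * b) \<le> Re (cnj a * z * b)"
    using abs_Re_le_cmod[of "cnj a * z * b"] by linarith
  ultimately show ?thesis by (simp add: norm_mult mult_ac)
qed

lemma quadratic_form_as_double_sum:
  fixes M :: "complex mat"
  assumes "M \<in> carrier_mat k k" and "v \<in> carrier_vec k"
  shows "conjugate v \<bullet> (M *\<^sub>v v) = (\<Sum>u\<in>{0..<k}. \<Sum>w\<in>{0..<k}. cnj (v$u) * M$$(u,w) * v$w)"
  using assms by (auto simp: sum_distrib_left mult.assoc scalar_prod_def intro!: sum.cong)

lemma hermitian_quadratic_form_real:
  fixes M :: "complex mat"
  assumes "M \<in> carrier_mat k k" and "v \<in> carrier_vec k"
    and hermitian: "\<And>u w. u < k \<Longrightarrow> w < k \<Longrightarrow> cnj (M $$ (u,w)) = M $$ (w,u)"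
  shows "Im (conjugate v \<bullet> (M *\<^sub>v v)) = 0"
proof -
  let ?Q = "\<Sum>u\<in>{0..<k}. \<Sum>w\<in>{0..<k}. cnj (v$u) * M$$(u,w) * v$w"
  have "cnj ?Q = (\<Sum>u\<in>{0..<k}. \<Sum>w\<in>{0..<k}. cnj (v$w) * M$$(w,u) * v$u)"
    by (simp add: cnj_sum hermitian mult_ac)
  also have "\<dots> = ?Q" by (rule sum.swap)
  finally have "?Q \<in> \<real>" by (simp only: Reals_cnj_iff)
  thus ?thesis unfolding quadratic_form_as_double_sum[OF assms(1,2)] complex_is_Real_iff .
qed

lemma cpsd_of_dominant_diagonal:
  fixes M :: "complex mat" and t r :: real
  assumes M: "M \<in> carrier_mat k k"
    and hermitian: "\<And>u w. u < k \<Longrightarrow> w < k \<Longrightarrow> cnj (M $$ (u,w)) = M $$ (w,u)"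
    and off_diagonal: "\<And>u w. u < k \<Longrightarrow> w < k \<Longrightarrow> cmod (M $$ (u,w) - (if u = w then of_real t else 0)) \<le> r"
    and dominant: "real k * r \<le> t"
  shows "cpsd k M"
  unfolding cpsd_def
proof (intro conjI[OF M] ballI)
  fix v :: "complex vec" assume v: "v \<in> carrier_vec k"
  define q where "q u w = cnj (v$u) * M$$(u,w) * v$w" for u w
  define nv where "nv u = (cmod (v$u))\<^sup>2" for u
  have "(if u = w then t * nv u else 0) - r * (nv u + nv w) / 2 \<le> Re (q u w)" if "u < k" "w < k" for u w
  proof -
    define R where "R = M$$(u,w) - (if u = w then of_real t else 0)"
    have "q u w = cnj (v$u) * (if u = w then of_real t else 0) * v$w + cnj (v$u) * R * v$w"
      unfolding q_def R_def by (simp add: algebra_simps)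
    moreover have "Re (cnj (v$u) * (if u = w then of_real t else 0) * v$w) = (if u = w then t * nv u else 0)"
      by (auto simp: nv_def cmod_power2) (simp add: algebra_simps power2_eq_square)
    moreover have "- r * (nv u + nv w) / 2 \<le> Re (cnj (v$u) * R * v$w)"
      unfolding nv_def R_def by (rule re_cnj_mult_mult_ge[OF off_diagonal[OF that]])
    ultimately show ?thesis by simp
  qed
  hence "(\<Sum>u\<in>{0..<k}. \<Sum>w\<in>{0..<k}. (if u = w then t * nv u else 0) - r * (nv u + nv w) / 2)
      \<le> Re (conjugate v \<bullet> (M *\<^sub>v v))"
    unfolding quadratic_form_as_double_sum[OF M v] Re_sum q_def[symmetric] by (intro sum_mono) auto
  moreover have "(\<Sum>u\<in>{0..<k}. \<Sum>w\<in>{0..<k}. nv u + nv w) = 2 * real k * (\<Sum>u\<in>{0..<k}. nv u)"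
    by (simp add: sum.distrib sum_distrib_left mult.assoc)
  moreover have "(\<Sum>u\<in>{0..<k}. \<Sum>w\<in>{0..<k}. (if u = w then t * nv u else 0) - r * (nv u + nv w) / 2)
      = t * (\<Sum>u\<in>{0..<k}. nv u) - r / 2 * (\<Sum>u\<in>{0..<k}. \<Sum>w\<in>{0..<k}. nv u + nv w)"
    by (simp add: sum_subtractf sum_distrib_left sum_divide_distrib)
  moreover have "0 \<le> (t - real k * r) * (\<Sum>u\<in>{0..<k}. nv u)"
    using dominant by (intro mult_nonneg_nonneg sum_nonneg) (auto simp: nv_def)
  ultimately show "Im (conjugate v \<bullet> (M *\<^sub>v v)) = 0 \<and> 0 \<le> Re (conjugate v \<bullet> (M *\<^sub>v v))"
    using hermitian_quadratic_form_real[OF M v hermitian] by (simp add: algebra_simps)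
qed

lemma cov_mat_shifted:
  fixes E :: "real mat" and t :: real
  assumes E: "E \<in> carrier_mat (2*n) (2*n)" and E_sym: "transpose_mat E = E"
    and E_small: "\<And>u w. u < 2*n \<Longrightarrow> w < 2*n \<Longrightarrow> \<bar>E $$ (u,w)\<bar> \<le> 2"
    and t: "6 * real n \<le> t"
  shows "cov_mat n (t \<cdot>\<^sub>m 1\<^sub>m (2*n) + E)"
proof -
  let ?G = "t \<cdot>\<^sub>m 1\<^sub>m (2*n) + E" and ?J = "sympl_form n"
  let ?M = "map_mat complex_of_real ?G + \<i> \<cdot>\<^sub>m map_mat complex_of_real ?J"
  have E_swap: "E $$ (w,u) = E $$ (u,w)" if "u < 2*n" "w < 2*n" for u w
    using that E E_sym by (metis carrier_matD index_transpose_mat(1))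
  have M: "?M $$ (u,w) = of_real ((if u = w then t else 0) + E $$ (u,w)) + \<i> * of_real (?J $$ (u,w))"
    if "u < 2*n" "w < 2*n" for u w
    using that E by simp
  have "cpsd (2*n) ?M"
  proof (rule cpsd_of_dominant_diagonal[where t = t and r = 3])
    show "?M \<in> carrier_mat (2*n) (2*n)" using E by simp
    show "cnj (?M $$ (u,w)) = ?M $$ (w,u)" if "u < 2*n" "w < 2*n" for u w
      unfolding M[OF that] M[OF that(2,1)] using that by (auto simp: E_swap sympl_form_index complex_eq_iff)
    show "cmod (?M $$ (u,w) - (if u = w then of_real t else 0)) \<le> 3" if "u < 2*n" "w < 2*n" for u w
    proof -
      have "?M $$ (u,w) - (if u = w then of_real t else 0) = of_real (E $$ (u,w)) + \<i> * of_real (?J $$ (u,w))"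
        unfolding M[OF that] by simp
      also have "cmod \<dots> \<le> \<bar>E $$ (u,w)\<bar> + \<bar>?J $$ (u,w)\<bar>"
        using norm_triangle_ineq[of "of_real (E $$ (u,w))" "\<i> * of_real (?J $$ (u,w))"] by (simp add: norm_mult)
      also have "\<dots> \<le> 3" using E_small[OF that] that by (auto simp: sympl_form_index)
      finally show ?thesis .
    qed
    show "real (2*n) * 3 \<le> t" using t by simp
  qed
  moreover have "transpose_mat ?G = ?G" using E E_swap by (intro eq_matI) auto
  ultimately show ?thesis unfolding cov_mat_def using E by simp
qed

section \<open>The cross condition\<close>

definition sym_unit_mat :: "nat \<Rightarrow> nat \<Rightarrow> nat \<Rightarrow> real mat" where
  "sym_unit_mat N k l = mat N N (\<lambda>(u,w). of_bool (u = k \<and> w = l) + of_bool (u = l \<and> w = k))"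

lemma sym_unit_mat_dim [simp]: "dim_row (sym_unit_mat N k l) = N" "dim_col (sym_unit_mat N k l) = N"
  by (simp_all add: sym_unit_mat_def)

lemma sym_unit_mat_carrier [simp]: "sym_unit_mat N k l \<in> carrier_mat N N"
  by (simp add: sym_unit_mat_def)

lemma sym_unit_mat_symmetric: "transpose_mat (sym_unit_mat N k l) = sym_unit_mat N k l"
  by (rule eq_matI) (simp_all add: sym_unit_mat_def conj_commute add.commute)

lemma sym_unit_mat_index_le: "u < N \<Longrightarrow> w < N \<Longrightarrow> \<bar>sym_unit_mat N k l $$ (u,w)\<bar> \<le> 2"
  by (simp add: sym_unit_mat_def)

lemma sym_unit_mat_sandwich:
  fixes A C :: "real mat"
  assumes A: "A \<in> carrier_mat nr N" and C: "C \<in> carrier_mat nr' N"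
    and "i < nr" "j < nr'" "k < N" "l < N"
  shows "(A * sym_unit_mat N k l * transpose_mat C) $$ (i,j) = A $$ (i,k) * C $$ (j,l) + A $$ (i,l) * C $$ (j,k)"
proof -
  have AE: "(A * sym_unit_mat N k l) $$ (i,w) = of_bool (w = l) * A $$ (i,k) + of_bool (w = k) * A $$ (i,l)"
    if "w < N" for w
    using A assms(3-6) that by (simp add: sym_unit_mat_def scalar_prod_def sum.distrib algebra_simps)
  have "(A * sym_unit_mat N k l * transpose_mat C) $$ (i,j) = (\<Sum>w\<in>{0..<N}. (A * sym_unit_mat N k l) $$ (i,w) * C $$ (j,w))"
    using A C assms(3-6) by (auto simp: scalar_prod_def mult.commute intro!: sum.cong)
  also have "\<dots> = (\<Sum>w\<in>{0..<N}. of_bool (w = l) * (A $$ (i,k) * C $$ (j,w)) + of_bool (w = k) * (A $$ (i,l) * C $$ (j,w)))"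
    by (intro sum.cong) (simp_all add: AE algebra_simps)
  also have "\<dots> = A $$ (i,k) * C $$ (j,l) + A $$ (i,l) * C $$ (j,k)"
    using assms(5,6) by (simp add: sum.distrib)
  finally show ?thesis .
qed

lemma sandwich_add_index:
  fixes X Y G H :: "'a::comm_ring mat"
  assumes "X \<in> carrier_mat nr N" "Y \<in> carrier_mat nr' N" "G \<in> carrier_mat N N" "H \<in> carrier_mat N N"
    and "i < nr" "j < nr'"
  shows "(X * (G + H) * transpose_mat Y) $$ (i,j) = (X * G * transpose_mat Y) $$ (i,j) + (X * H * transpose_mat Y) $$ (i,j)"
  using assms by (simp add: mult_add_distrib_mat[of _ nr N] add_mult_distrib_mat[of _ nr N])

lemma off_diagonal_block_vanishes:
  fixes A B C D :: "real mat"
  assumes carrier: "A \<in> carrier_mat (2*n) (2*n)" "B \<in> carrier_mat (2*n) (2*n)" "C \<in> carrier_mat (2*n) (2*n)" "D \<in> carrier_mat (2*n) (2*n)"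
    and preserves: "\<forall>G. cov_mat n G \<longrightarrow>
           (let M = four_block_mat A B C D * four_block_mat G (0\<^sub>m (2*n) (2*n)) (0\<^sub>m (2*n) (2*n)) G * transpose_mat (four_block_mat A B C D)
            in \<forall>i j. i < 2*n \<and> 2*n \<le> j \<and> j < 4*n \<longrightarrow> M $$ (i,j) = 0 \<and> M $$ (j,i) = 0)"
    and G: "cov_mat n G"
  shows "A * G * transpose_mat C + B * G * transpose_mat D = 0\<^sub>m (2*n) (2*n)"
proof (rule eq_matI)
  fix i j assume "i < dim_row (0\<^sub>m (2*n) (2*n) :: real mat)" "j < dim_col (0\<^sub>m (2*n) (2*n) :: real mat)"
  hence i: "i < 2*n" and j: "j < 2*n" by auto
  have "G \<in> carrier_mat (2*n) (2*n)" using G unfolding cov_mat_def by simp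
  from preserves[rule_format, OF G, unfolded Let_def four_block_congruence[OF carrier this this], rule_format, of i "j + 2*n"]
  show "(A * G * transpose_mat C + B * G * transpose_mat D) $$ (i,j) = 0\<^sub>m (2*n) (2*n) $$ (i,j)"
    using carrier i j \<open>G \<in> carrier_mat (2*n) (2*n)\<close> by simp
qed (use carrier in auto)

lemma cross_condition_of_cov_mat:
  fixes A B C D :: "real mat"
  assumes carrier: "A \<in> carrier_mat (2*n) (2*n)" "B \<in> carrier_mat (2*n) (2*n)" "C \<in> carrier_mat (2*n) (2*n)" "D \<in> carrier_mat (2*n) (2*n)"
    and off_diagonal: "\<And>G. cov_mat n G \<Longrightarrow> A * G * transpose_mat C + B * G * transpose_mat D = 0\<^sub>m (2*n) (2*n)"
    and "i < 2*n" "j < 2*n" "k < 2*n" "l < 2*n"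
  shows "A $$ (i,k) * C $$ (j,l) + A $$ (i,l) * C $$ (j,k) + B $$ (i,k) * D $$ (j,l) + B $$ (i,l) * D $$ (j,k) = 0"
proof -
  define L where "L G = (A * G * transpose_mat C) $$ (i,j) + (B * G * transpose_mat D) $$ (i,j)" for G
  let ?T = "(6 * real n) \<cdot>\<^sub>m 1\<^sub>m (2*n)" and ?E = "sym_unit_mat (2*n) k l"
  have L_zero: "L G = 0" if "cov_mat n G" for G
  proof -
    have "G \<in> carrier_mat (2*n) (2*n)" using that unfolding cov_mat_def by simp
    thus ?thesis
      using arg_cong[OF off_diagonal[OF that], of "\<lambda>M. M $$ (i,j)"] carrier assms(6,7) by (simp add: L_def)
  qed
  have "cov_mat n (?T + 0\<^sub>m (2*n) (2*n))" by (rule cov_mat_shifted) auto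
  hence "L ?T = 0" using L_zero by simp
  moreover have "L (?T + ?E) = 0"
    by (intro L_zero cov_mat_shifted sym_unit_mat_carrier sym_unit_mat_symmetric sym_unit_mat_index_le) auto
  moreover have "L (?T + ?E) = L ?T + L ?E"
    using sandwich_add_index[OF carrier(1,3) _ sym_unit_mat_carrier assms(6,7), of ?T]
      sandwich_add_index[OF carrier(2,4) _ sym_unit_mat_carrier assms(6,7), of ?T]
    unfolding L_def by simp
  ultimately have "L ?E = 0" by simp
  thus ?thesis
    unfolding L_def sym_unit_mat_sandwich[OF carrier(1,3) assms(6-9)] sym_unit_mat_sandwich[OF carrier(2,4) assms(6-9)]
    by (simp add: algebra_simps)
qed

section \<open>A common direction for all column pairs\<close>

lemma parallel_imp_multiple:
  fixes p q a b :: real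
  assumes "p \<noteq> 0 \<or> q \<noteq> 0" and "q * a = p * b"
  shows "\<exists>w. a = w * p \<and> b = w * q"
proof -
  have "p\<^sup>2 + q\<^sup>2 \<noteq> 0" using assms(1) by (simp add: sum_power2_eq_zero_iff)
  moreover have "a * (p\<^sup>2 + q\<^sup>2) - (p * a + q * b) * p = q * (q * a - p * b)"
    and "b * (p\<^sup>2 + q\<^sup>2) - (p * a + q * b) * q = p * (p * b - q * a)"
    by (simp_all add: power2_eq_square algebra_simps)
  ultimately show ?thesis
    using assms(2) by (intro exI[of _ "(p * a + q * b) / (p\<^sup>2 + q\<^sup>2)"]) (simp add: field_simps)
qed

lemma orthogonal_imp_parallel:
  fixes x y p q r s :: real
  assumes "x * r + y * s = 0" "p * r + q * s = 0" "r \<noteq> 0 \<or> s \<noteq> 0"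
  shows "q * x = p * y"
proof -
  have "(q * x - p * y) * r = q * (x * r + y * s) - y * (p * r + q * s)"
    and "(q * x - p * y) * s = x * (p * r + q * s) - p * (x * r + y * s)"
    by (simp_all add: algebra_simps)
  thus ?thesis using assms by auto
qed

lemma rotation_solvable:
  fixes p q r s :: real
  assumes "p \<noteq> 0 \<or> q \<noteq> 0"
  shows "\<exists>x y. x * p + y * q = r \<and> y * p - x * q = s"
proof -
  define \<rho> where "\<rho> = p\<^sup>2 + q\<^sup>2"
  have \<rho>: "\<rho> \<noteq> 0" using assms unfolding \<rho>_def by (simp add: sum_power2_eq_zero_iff)
  define x where "x = (p * r - q * s) / \<rho>"
  define y where "y = (q * r + p * s) / \<rho>"
  have "\<rho> * (x * p + y * q) = (p * r - q * s) * p + (q * r + p * s) * q"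
    and "\<rho> * (y * p - x * q) = (q * r + p * s) * p - (p * r - q * s) * q"
    using \<rho> unfolding x_def y_def by (simp_all add: field_simps)
  moreover have "(p * r - q * s) * p + (q * r + p * s) * q = \<rho> * r"
    and "(q * r + p * s) * p - (p * r - q * s) * q = \<rho> * s"
    unfolding \<rho>_def by (simp_all add: power2_eq_square algebra_simps)
  ultimately show ?thesis using \<rho> by auto
qed

lemma outer_eq_imp_proportional:
  fixes w z w' z' :: "'a \<Rightarrow> real"
  assumes outer: "\<And>i j. i \<in> I \<Longrightarrow> j \<in> J \<Longrightarrow> w i * z' j = w' i * z j"
    and "i0 \<in> I" "w i0 \<noteq> 0" "j0 \<in> J" "z j0 \<noteq> 0"
  shows "\<exists>\<mu>. (\<forall>i\<in>I. w' i = \<mu> * w i) \<and> (\<forall>j\<in>J. z' j = \<mu> * z j)"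
proof -
  define \<mu> where "\<mu> = z' j0 / z j0"
  have w': "w' i = \<mu> * w i" if "i \<in> I" for i
    using outer[OF that assms(4)] assms(5) unfolding \<mu>_def by (simp add: field_simps)
  have "z' j = \<mu> * z j" if "j \<in> J" for j
  proof -
    have "w i0 * (z' j - \<mu> * z j) = 0"
      using outer[OF assms(2) that] w'[OF assms(2)] by (simp add: algebra_simps)
    thus ?thesis using assms(3) by simp
  qed
  thus ?thesis using w' by blast
qed

text \<open>The assumption \<open>cross\<close> is the \<open>(i,j)\<close> entry of \<open>A G C\<^sup>T + B G D\<^sup>T = 0\<close> for
  \<open>G = e\<^sub>k e\<^sub>l\<^sup>T + e\<^sub>l e\<^sub>k\<^sup>T\<close>; \<open>columns_independent\<close> says that the columns of
  \<open>[[A, B], [C, D]]\<close> are linearly independent.\<close>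

locale cross_vanishing_blocks =
  fixes N :: nat and A B C D :: "real mat"
  assumes cross: "\<And>i j k l. i < N \<Longrightarrow> j < N \<Longrightarrow> k < N \<Longrightarrow> l < N \<Longrightarrow>
      A $$ (i,k) * C $$ (j,l) + A $$ (i,l) * C $$ (j,k) + B $$ (i,k) * D $$ (j,l) + B $$ (i,l) * D $$ (j,k) = 0"
    and columns_independent: "\<And>x y. \<forall>i<N. (\<Sum>m<N. x m * A $$ (i,m) + y m * B $$ (i,m)) = 0 \<Longrightarrow>
      \<forall>j<N. (\<Sum>m<N. x m * C $$ (j,m) + y m * D $$ (j,m)) = 0 \<Longrightarrow> \<forall>m<N. x m = 0 \<and> y m = 0"
    and top_nonzero: "\<exists>i<N. \<exists>k<N. A $$ (i,k) \<noteq> 0 \<or> B $$ (i,k) \<noteq> 0"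
    and bottom_nonzero: "\<exists>j<N. \<exists>k<N. C $$ (j,k) \<noteq> 0 \<or> D $$ (j,k) \<noteq> 0"
begin

lemma column_pair_independent:
  assumes "k < N" and "\<forall>i<N. \<alpha> * A $$ (i,k) + \<beta> * B $$ (i,k) = 0" and "\<forall>j<N. \<alpha> * C $$ (j,k) + \<beta> * D $$ (j,k) = 0"
  shows "\<alpha> = 0 \<and> \<beta> = 0"
  using columns_independent[of "\<lambda>m. of_bool (m = k) * \<alpha>" "\<lambda>m. of_bool (m = k) * \<beta>"] assms
  by (simp add: sum.distrib mult.assoc)

lemma column_outside_pair_span:
  assumes "k < N" "l < N" "k \<noteq> l"
    and "\<forall>i<N. A $$ (i,l) = x * A $$ (i,k) + y * B $$ (i,k)" and "\<forall>j<N. C $$ (j,l) = x * C $$ (j,k) + y * D $$ (j,k)"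
  shows False
proof -
  have "\<forall>m<N. of_bool (m = k) * x - of_bool (m = l) = 0 \<and> of_bool (m = k) * y = 0"
    by (rule columns_independent) (use assms in \<open>simp_all add: sum.distrib sum_subtractf left_diff_distrib mult.assoc\<close>)
  from this[rule_format, OF assms(2)] show False using assms(3) by simp
qed

lemma column_top_nonzero:
  assumes k: "k < N"
  shows "\<exists>i<N. A $$ (i,k) \<noteq> 0 \<or> B $$ (i,k) \<noteq> 0"
proof (rule ccontr)
  assume "\<not> ?thesis"
  hence zero: "\<forall>i<N. A $$ (i,k) = 0 \<and> B $$ (i,k) = 0" by auto
  have "A $$ (i,l) = 0 \<and> B $$ (i,l) = 0" if "i < N" "l < N" for i l
    using cross[OF that(1) _ k that(2)] zero that
    by (intro column_pair_independent[OF k]) (auto simp: mult.commute)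
  thus False using top_nonzero by auto
qed

lemma column_bottom_nonzero:
  assumes k: "k < N"
  shows "\<exists>j<N. C $$ (j,k) \<noteq> 0 \<or> D $$ (j,k) \<noteq> 0"
proof (rule ccontr)
  assume "\<not> ?thesis"
  hence zero: "\<forall>j<N. C $$ (j,k) = 0 \<and> D $$ (j,k) = 0" by auto
  have "C $$ (j,l) = 0 \<and> D $$ (j,l) = 0" if "j < N" "l < N" for j l
    using cross[OF _ that(1) k that(2)] zero that
    by (intro column_pair_independent[OF k]) (auto simp: mult.commute)
  thus False using bottom_nonzero by auto
qed

definition is_column_direction :: "nat \<Rightarrow> real \<Rightarrow> real \<Rightarrow> bool" where
  "is_column_direction k p q \<longleftrightarrow> (p \<noteq> 0 \<or> q \<noteq> 0) \<and>
     (\<forall>i<N. q * A $$ (i,k) = p * B $$ (i,k)) \<and> (\<forall>j<N. p * C $$ (j,k) + q * D $$ (j,k) = 0)"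

lemma column_direction_exists:
  assumes k: "k < N"
  shows "\<exists>p q. is_column_direction k p q"
proof -
  obtain i0 where i0: "i0 < N" "A $$ (i0,k) \<noteq> 0 \<or> B $$ (i0,k) \<noteq> 0"
    using column_top_nonzero[OF k] by blast
  obtain j0 where j0: "j0 < N" "C $$ (j0,k) \<noteq> 0 \<or> D $$ (j0,k) \<noteq> 0"
    using column_bottom_nonzero[OF k] by blast
  have orth: "A $$ (i,k) * C $$ (j,k) + B $$ (i,k) * D $$ (j,k) = 0" if "i < N" "j < N" for i j
    using cross[OF that k k] by simp
  have "B $$ (i0,k) * A $$ (i,k) = A $$ (i0,k) * B $$ (i,k)" if "i < N" for i
    using orth[OF that j0(1)] orth[OF i0(1) j0(1)] j0(2) by (rule orthogonal_imp_parallel)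
  thus ?thesis using i0 orth[OF i0(1)] unfolding is_column_direction_def by blast
qed

lemma column_factorization:
  assumes k: "k < N" and dir: "is_column_direction k p q"
  obtains w z where "\<forall>i<N. A $$ (i,k) = w i * p \<and> B $$ (i,k) = w i * q"
    and "\<forall>j<N. C $$ (j,k) = z j * - q \<and> D $$ (j,k) = z j * p"
    and "\<exists>i<N. w i \<noteq> 0" and "\<exists>j<N. z j \<noteq> 0"
proof -
  have pq: "p \<noteq> 0 \<or> q \<noteq> 0" using dir unfolding is_column_direction_def by blast
  have "\<exists>c. A $$ (i,k) = c * p \<and> B $$ (i,k) = c * q" if "i < N" for i
    by (rule parallel_imp_multiple[OF pq]) (use dir that in \<open>simp add: is_column_direction_def\<close>)
  then obtain w where w: "\<forall>i<N. A $$ (i,k) = w i * p \<and> B $$ (i,k) = w i * q"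
    using choice[of "\<lambda>i c. i < N \<longrightarrow> A $$ (i,k) = c * p \<and> B $$ (i,k) = c * q"] by blast
  have "\<exists>c. C $$ (j,k) = c * - q \<and> D $$ (j,k) = c * p" if "j < N" for j
    by (rule parallel_imp_multiple) (use pq dir that in \<open>auto simp: is_column_direction_def eq_neg_iff_add_eq_0\<close>)
  then obtain z where z: "\<forall>j<N. C $$ (j,k) = z j * - q \<and> D $$ (j,k) = z j * p"
    using choice[of "\<lambda>j c. j < N \<longrightarrow> C $$ (j,k) = c * - q \<and> D $$ (j,k) = c * p"] by blast
  have "\<exists>i<N. w i \<noteq> 0" using column_top_nonzero[OF k] w by fastforce
  moreover have "\<exists>j<N. z j \<noteq> 0" using column_bottom_nonzero[OF k] z by fastforce
  ultimately show thesis using that w z by blast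
qed

lemma column_factors_proportional:
  assumes k: "k < N" and l: "l < N" and det: "q * p' \<noteq> p * q'"
    and dir_k: "is_column_direction k p q" and dir_l: "is_column_direction l p' q'"
  obtains w z \<mu> where "\<forall>i<N. A $$ (i,k) = w i * p \<and> B $$ (i,k) = w i * q"
    and "\<forall>j<N. C $$ (j,k) = z j * - q \<and> D $$ (j,k) = z j * p"
    and "\<forall>i<N. A $$ (i,l) = \<mu> * w i * p'" and "\<forall>j<N. C $$ (j,l) = \<mu> * z j * - q'"
proof -
  obtain w z where w: "\<forall>i<N. A $$ (i,k) = w i * p \<and> B $$ (i,k) = w i * q"
    and z: "\<forall>j<N. C $$ (j,k) = z j * - q \<and> D $$ (j,k) = z j * p"
    and w0: "\<exists>i<N. w i \<noteq> 0" and z0: "\<exists>j<N. z j \<noteq> 0"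
    by (rule column_factorization[OF k dir_k])
  obtain w' z' where w': "\<forall>i<N. A $$ (i,l) = w' i * p' \<and> B $$ (i,l) = w' i * q'"
    and z': "\<forall>j<N. C $$ (j,l) = z' j * - q' \<and> D $$ (j,l) = z' j * p'"
    and "\<exists>i<N. w' i \<noteq> 0" "\<exists>j<N. z' j \<noteq> 0"
    by (rule column_factorization[OF l dir_l])
  have "w i * z' j = w' i * z j" if "i \<in> {..<N}" "j \<in> {..<N}" for i j
  proof -
    have i: "i < N" and j: "j < N" using that by auto
    have "0 = A $$ (i,k) * C $$ (j,l) + A $$ (i,l) * C $$ (j,k) + B $$ (i,k) * D $$ (j,l) + B $$ (i,l) * D $$ (j,k)"
      using cross[OF i j k l] by simp
    also have "\<dots> = (q * p' - p * q') * (w i * z' j - w' i * z j)"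
      using w[rule_format, OF i] z[rule_format, OF j] w'[rule_format, OF i] z'[rule_format, OF j]
      by (simp add: algebra_simps)
    finally show ?thesis using det by simp
  qed
  moreover obtain i0 j0 where "i0 < N" "w i0 \<noteq> 0" "j0 < N" "z j0 \<noteq> 0" using w0 z0 by blast
  ultimately have "\<exists>\<mu>. (\<forall>i\<in>{..<N}. w' i = \<mu> * w i) \<and> (\<forall>j\<in>{..<N}. z' j = \<mu> * z j)"
    by (intro outer_eq_imp_proportional) auto
  then obtain \<mu> where "\<forall>i<N. w' i = \<mu> * w i" "\<forall>j<N. z' j = \<mu> * z j"
    by (metis lessThan_iff)
  hence "\<forall>i<N. A $$ (i,l) = \<mu> * w i * p'" "\<forall>j<N. C $$ (j,l) = \<mu> * z j * - q'"
    using w' z' by simp_all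
  from w z this show thesis by (rule that)
qed

lemma column_directions_parallel_distinct:
  assumes k: "k < N" and l: "l < N" and kl: "k \<noteq> l"
    and dir_k: "is_column_direction k p q" and dir_l: "is_column_direction l p' q'"
  shows "q * p' = p * q'"
proof (rule ccontr)
  assume "q * p' \<noteq> p * q'"
  then obtain w z \<mu> where w: "\<forall>i<N. A $$ (i,k) = w i * p \<and> B $$ (i,k) = w i * q"
    and z: "\<forall>j<N. C $$ (j,k) = z j * - q \<and> D $$ (j,k) = z j * p"
    and w': "\<forall>i<N. A $$ (i,l) = \<mu> * w i * p'" and z': "\<forall>j<N. C $$ (j,l) = \<mu> * z j * - q'"
    using column_factors_proportional[OF k l _ dir_k dir_l] by blast
  have "p \<noteq> 0 \<or> q \<noteq> 0" using dir_k unfolding is_column_direction_def by blast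
  then obtain x y where xy: "x * p + y * q = \<mu> * p'" "y * p - x * q = - \<mu> * q'"
    using rotation_solvable by blast
  have "A $$ (i,l) = x * A $$ (i,k) + y * B $$ (i,k)" if "i < N" for i
  proof -
    have "A $$ (i,l) = w i * (\<mu> * p')" using w' that by simp
    thus ?thesis unfolding xy(1)[symmetric] using w that by (simp add: algebra_simps)
  qed
  moreover have "C $$ (j,l) = x * C $$ (j,k) + y * D $$ (j,k)" if "j < N" for j
  proof -
    have "C $$ (j,l) = z j * (- \<mu> * q')" using z' that by simp
    thus ?thesis unfolding xy(2)[symmetric] using z that by (simp add: algebra_simps)
  qed
  ultimately show False using column_outside_pair_span[OF k l kl] by blast
qed

lemma column_directions_parallel:
  assumes k: "k < N" and l: "l < N"
    and dir_k: "is_column_direction k p q" and dir_l: "is_column_direction l p' q'"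
  shows "q * p' = p * q'"
proof (cases "k = l")
  case True
  obtain i where i: "i < N" "A $$ (i,k) \<noteq> 0 \<or> B $$ (i,k) \<noteq> 0" using column_top_nonzero[OF k] by blast
  have "p * B $$ (i,k) + q * - A $$ (i,k) = 0" "p' * B $$ (i,k) + q' * - A $$ (i,k) = 0"
    using dir_k dir_l i(1) True unfolding is_column_direction_def by auto
  from orthogonal_imp_parallel[OF this] i(2) have "q' * p = p' * q" by auto
  thus ?thesis by (metis mult.commute)
qed (use column_directions_parallel_distinct assms in blast)

theorem common_direction:
  assumes "0 < N"
  shows "\<exists>p q. (p \<noteq> 0 \<or> q \<noteq> 0) \<and> (\<forall>i<N. \<forall>k<N. q * A $$ (i,k) = p * B $$ (i,k) \<and> p * C $$ (i,k) + q * D $$ (i,k) = 0)"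
proof -
  obtain p q where dir0: "is_column_direction 0 p q" using column_direction_exists[OF assms] by blast
  have "q * A $$ (i,k) = p * B $$ (i,k) \<and> p * C $$ (i,k) + q * D $$ (i,k) = 0" if i: "i < N" and k: "k < N" for i k
  proof -
    obtain p' q' where dir_k: "is_column_direction k p' q'" using column_direction_exists[OF k] by blast
    hence "p' \<noteq> 0 \<or> q' \<noteq> 0" unfolding is_column_direction_def by blast
    moreover have "q' * p = p' * q" using column_directions_parallel[OF k assms dir_k dir0] by simp
    ultimately obtain c where c: "p = c * p'" "q = c * q'" using parallel_imp_multiple by blast
    have "q * A $$ (i,k) - p * B $$ (i,k) = c * (q' * A $$ (i,k) - p' * B $$ (i,k))"
      and "p * C $$ (i,k) + q * D $$ (i,k) = c * (p' * C $$ (i,k) + q' * D $$ (i,k))"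
      unfolding c by (simp_all add: algebra_simps)
    thus ?thesis using dir_k i unfolding is_column_direction_def by simp
  qed
  moreover have "p \<noteq> 0 \<or> q \<noteq> 0" using dir0 unfolding is_column_direction_def by blast
  ultimately show ?thesis by blast
qed

end

lemma cross_vanishing_blocks_of_symplectic:
  fixes A B C D :: "real mat"
  assumes sympl: "symplectic (2*n) (four_block_mat A B C D)" and "0 < n"
    and carrier: "A \<in> carrier_mat (2*n) (2*n)" "B \<in> carrier_mat (2*n) (2*n)" "C \<in> carrier_mat (2*n) (2*n)" "D \<in> carrier_mat (2*n) (2*n)"
    and off_diagonal: "\<And>G. cov_mat n G \<Longrightarrow> A * G * transpose_mat C + B * G * transpose_mat D = 0\<^sub>m (2*n) (2*n)"
  shows "cross_vanishing_blocks (2*n) A B C D"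
proof
  let ?S = "four_block_mat A B C D" and ?N = "2*n"
  show "A $$ (i,k) * C $$ (j,l) + A $$ (i,l) * C $$ (j,k) + B $$ (i,k) * D $$ (j,l) + B $$ (i,l) * D $$ (j,k) = 0"
    if "i < ?N" "j < ?N" "k < ?N" "l < ?N" for i j k l
    using cross_condition_of_cov_mat[OF carrier off_diagonal that] .
  show "\<forall>m<?N. x m = 0 \<and> y m = 0"
    if top: "\<forall>i<?N. (\<Sum>m<?N. x m * A $$ (i,m) + y m * B $$ (i,m)) = 0"
      and bottom: "\<forall>j<?N. (\<Sum>m<?N. x m * C $$ (j,m) + y m * D $$ (j,m)) = 0" for x y
  proof -
    let ?v = "vec ?N x @\<^sub>v vec ?N y"
    have "A *\<^sub>v vec ?N x + B *\<^sub>v vec ?N y = 0\<^sub>v ?N" "C *\<^sub>v vec ?N x + D *\<^sub>v vec ?N y = 0\<^sub>v ?N"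
      using top bottom carrier
      by (auto intro!: eq_vecI simp: scalar_prod_def atLeast0LessThan sum.distrib[symmetric] mult.commute)
    hence "?S *\<^sub>v ?v = 0\<^sub>v ?N @\<^sub>v 0\<^sub>v ?N" using four_block_mat_mult_vec[OF carrier] by simp
    also have "\<dots> = 0\<^sub>v (2 * ?N)" by (rule eq_vecI) auto
    finally have "?v = 0\<^sub>v (2 * ?N)" using symplectic_mult_vec_eq_zero[OF sympl] by (simp add: mult_2)
    hence "?v $ m = 0" "?v $ (m + ?N) = 0" if "m < ?N" for m using that by simp_all
    thus ?thesis by simp
  qed
  have row: "\<exists>k<?N. ?S $$ (r,k) \<noteq> 0 \<or> ?S $$ (r,k + ?N) \<noteq> 0" if r: "r < 2 * ?N" for r
  proof -
    obtain u where u: "u < 2 * ?N" "?S $$ (r,u) \<noteq> 0" using symplectic_row_nonzero[OF sympl r] by blast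
    show ?thesis
    proof (cases "u < ?N")
      case False
      thus ?thesis using u by (intro exI[of _ "u - ?N"]) auto
    qed (use u in auto)
  qed
  have "0 < ?N" using \<open>0 < n\<close> by simp
  obtain k where "k < ?N" "?S $$ (0,k) \<noteq> 0 \<or> ?S $$ (0,k + ?N) \<noteq> 0" using row[of 0] \<open>0 < ?N\<close> by auto
  thus "\<exists>i<?N. \<exists>k<?N. A $$ (i,k) \<noteq> 0 \<or> B $$ (i,k) \<noteq> 0"
    using carrier \<open>0 < ?N\<close> by (intro exI[of _ 0] exI[of _ k]) auto
  obtain k' where "k' < ?N" "?S $$ (?N,k') \<noteq> 0 \<or> ?S $$ (?N,k' + ?N) \<noteq> 0" using row[of ?N] \<open>0 < ?N\<close> by auto
  thus "\<exists>j<?N. \<exists>k<?N. C $$ (j,k) \<noteq> 0 \<or> D $$ (j,k) \<noteq> 0"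
    using carrier \<open>0 < ?N\<close> by (intro exI[of _ 0] exI[of _ k']) auto
qed

section \<open>Factorisation through a rotation\<close>

text \<open>The normalisation picks the unit vector on the line \<open>\<real>(p, q)\<close> that \<^const>\<open>mixA\<close> can
  represent: \<open>\<alpha> = s / c\<close>, or \<open>\<alpha> = \<infinity>\<close> when \<open>c = 0\<close>.\<close>

lemma unit_direction:
  fixes p q :: real
  assumes "p \<noteq> 0 \<or> q \<noteq> 0"
  shows "\<exists>c s t. c\<^sup>2 + s\<^sup>2 = 1 \<and> 0 \<le> c \<and> (c = 0 \<longrightarrow> s = 1) \<and> c = t * p \<and> s = t * q"
proof -
  define \<rho> where "\<rho> = sqrt (p\<^sup>2 + q\<^sup>2)"
  have \<rho>: "0 < \<rho>" unfolding \<rho>_def using assms by (simp add: sum_power2_gt_zero_iff)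
  define t where "t = (if 0 < p \<or> (p = 0 \<and> 0 < q) then 1 else -1) / \<rho>"
  have "(t * p)\<^sup>2 + (t * q)\<^sup>2 = (p\<^sup>2 + q\<^sup>2) / \<rho>\<^sup>2"
    unfolding t_def by (simp add: power_mult_distrib power_divide add_divide_distrib)
  also have "\<dots> = 1" using assms unfolding \<rho>_def by (simp add: sum_power2_eq_zero_iff)
  finally have "(t * p)\<^sup>2 + (t * q)\<^sup>2 = 1" .
  moreover have "0 \<le> t * p" using \<rho> unfolding t_def by (auto simp: zero_le_mult_iff)
  moreover have "t * q = 1" if "t * p = 0"
  proof -
    have "p = 0" using that \<rho> unfolding t_def by (auto split: if_splits)
    hence "\<rho> = \<bar>q\<bar>" unfolding \<rho>_def by simp
    thus ?thesis using \<open>p = 0\<close> assms unfolding t_def by auto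
  qed
  ultimately show ?thesis by blast
qed

lemma rotated_block_form:
  fixes A B C D :: "real mat"
  assumes carrier: "A \<in> carrier_mat N N" "B \<in> carrier_mat N N" "C \<in> carrier_mat N N" "D \<in> carrier_mat N N"
    and cs: "c\<^sup>2 + s\<^sup>2 = 1"
    and rel: "\<And>i k. i < N \<Longrightarrow> k < N \<Longrightarrow> s * A $$ (i,k) = c * B $$ (i,k) \<and> c * C $$ (i,k) + s * D $$ (i,k) = 0"
  obtains X Y where "X \<in> carrier_mat N N" "Y \<in> carrier_mat N N"
    and "four_block_mat A B C D = four_block_mat (c \<cdot>\<^sub>m X) (s \<cdot>\<^sub>m X) ((- s) \<cdot>\<^sub>m Y) (c \<cdot>\<^sub>m Y)"
proof
  have entries: "a = c * (c * a + s * b) \<and> b = s * (c * a + s * b) \<and> e = - s * (c * d - s * e) \<and> d = c * (c * d - s * e)"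
    if "s * a = c * b" "c * e + s * d = 0" for a b d e
  proof -
    have "c * (c * a + s * b) - a = s * (c * b - s * a) + (c\<^sup>2 + s\<^sup>2 - 1) * a"
      and "s * (c * a + s * b) - b = c * (s * a - c * b) + (c\<^sup>2 + s\<^sup>2 - 1) * b"
      and "- s * (c * d - s * e) - e = - c * (c * e + s * d) + (c\<^sup>2 + s\<^sup>2 - 1) * e"
      and "c * (c * d - s * e) - d = - s * (c * e + s * d) + (c\<^sup>2 + s\<^sup>2 - 1) * d"
      by (simp_all add: power2_eq_square algebra_simps)
    thus ?thesis using that cs by simp
  qed
  show "c \<cdot>\<^sub>m A + s \<cdot>\<^sub>m B \<in> carrier_mat N N" "c \<cdot>\<^sub>m D - s \<cdot>\<^sub>m C \<in> carrier_mat N N"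
    using carrier by auto
  show "four_block_mat A B C D = four_block_mat (c \<cdot>\<^sub>m (c \<cdot>\<^sub>m A + s \<cdot>\<^sub>m B)) (s \<cdot>\<^sub>m (c \<cdot>\<^sub>m A + s \<cdot>\<^sub>m B))
      ((- s) \<cdot>\<^sub>m (c \<cdot>\<^sub>m D - s \<cdot>\<^sub>m C)) (c \<cdot>\<^sub>m (c \<cdot>\<^sub>m D - s \<cdot>\<^sub>m C))"
    using carrier entries[OF rel[THEN conjunct1] rel[THEN conjunct2]]
    by (intro cong_four_block_mat) (auto intro!: eq_matI)
qed

lemma four_block_diag_mult_scalar_blocks:
  fixes X Y :: "'a::comm_ring_1 mat"
  assumes X: "X \<in> carrier_mat N N" and Y: "Y \<in> carrier_mat N N"
  shows "four_block_mat X (0\<^sub>m N N) (0\<^sub>m N N) Y * four_block_mat (a \<cdot>\<^sub>m 1\<^sub>m N) (b \<cdot>\<^sub>m 1\<^sub>m N) (c \<cdot>\<^sub>m 1\<^sub>m N) (d \<cdot>\<^sub>m 1\<^sub>m N)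
    = four_block_mat (a \<cdot>\<^sub>m X) (b \<cdot>\<^sub>m X) (c \<cdot>\<^sub>m Y) (d \<cdot>\<^sub>m Y)"
  using X Y by (subst mult_four_block_mat[of _ N N _ N _ N _ _ N _ N]) (auto simp: mult_smult_distrib)

lemma mixA_rotation:
  assumes cs: "c\<^sup>2 + s\<^sup>2 = 1" and c: "0 \<le> c" and c0: "c = 0 \<longrightarrow> s = 1"
  shows "\<exists>\<alpha>. mixA n \<alpha> = four_block_mat (c \<cdot>\<^sub>m 1\<^sub>m (2*n)) (s \<cdot>\<^sub>m 1\<^sub>m (2*n)) ((- s) \<cdot>\<^sub>m 1\<^sub>m (2*n)) (c \<cdot>\<^sub>m 1\<^sub>m (2*n))"
proof (cases "c = 0")
  case True
  have "mixA n PInfty = four_block_mat (c \<cdot>\<^sub>m 1\<^sub>m (2*n)) (s \<cdot>\<^sub>m 1\<^sub>m (2*n)) ((- s) \<cdot>\<^sub>m 1\<^sub>m (2*n)) (c \<cdot>\<^sub>m 1\<^sub>m (2*n))"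
    unfolding mixA_def using True c0 by (auto intro!: cong_four_block_mat eq_matI)
  thus ?thesis ..
next
  case False
  hence "0 < c" using c by simp
  have "1 + (s / c)\<^sup>2 = (1 / c)\<^sup>2"
    using \<open>0 < c\<close> cs by (simp add: field_simps power2_eq_square)
  hence "1 / sqrt (1 + (s / c)\<^sup>2) = c" using \<open>0 < c\<close> by simp
  hence "mixA n (ereal (s / c)) = four_block_mat (c \<cdot>\<^sub>m 1\<^sub>m (2*n)) (s \<cdot>\<^sub>m 1\<^sub>m (2*n)) ((- s) \<cdot>\<^sub>m 1\<^sub>m (2*n)) (c \<cdot>\<^sub>m 1\<^sub>m (2*n))"
    unfolding mixA_def using \<open>0 < c\<close> by (auto simp: smult_four_block_mat[of _ "2*n" "2*n"] intro!: cong_four_block_mat eq_matI)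
  thus ?thesis ..
qed

lemma smult_sandwich:
  fixes X Y G :: "'a::comm_ring mat"
  assumes "X \<in> carrier_mat nr N" "Y \<in> carrier_mat nr' N" "G \<in> carrier_mat N N"
  shows "(a \<cdot>\<^sub>m X) * G * transpose_mat (b \<cdot>\<^sub>m Y) = (a * b) \<cdot>\<^sub>m (X * G * transpose_mat Y)"
proof -
  have "transpose_mat (b \<cdot>\<^sub>m Y) = b \<cdot>\<^sub>m transpose_mat Y" by (rule eq_matI) auto
  moreover have "(a \<cdot>\<^sub>m X) * G = a \<cdot>\<^sub>m (X * G)" using assms by (simp add: mult_smult_assoc_mat)
  moreover have "(a \<cdot>\<^sub>m M) * (b \<cdot>\<^sub>m Z) = (a * b) \<cdot>\<^sub>m (M * Z)"
    if "M \<in> carrier_mat nr N" "Z \<in> carrier_mat N nr'" for M Z :: "'a mat"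
    by (rule eq_matI) (use that in \<open>auto simp: mult_ac\<close>)
  ultimately show ?thesis using assms by simp
qed

lemma symplectic_of_rotated_blocks:
  fixes X Y :: "real mat"
  assumes "symplectic (2*n) (four_block_mat (c \<cdot>\<^sub>m X) (s \<cdot>\<^sub>m X) ((- s) \<cdot>\<^sub>m Y) (c \<cdot>\<^sub>m Y))"
    and X: "X \<in> carrier_mat (2*n) (2*n)" and Y: "Y \<in> carrier_mat (2*n) (2*n)" and cs: "c\<^sup>2 + s\<^sup>2 = 1"
  shows "symplectic n X \<and> symplectic n Y"
proof -
  let ?J = "sympl_form n"
  have "c * c * m + s * s * m = (c\<^sup>2 + s\<^sup>2) * m" for m :: real
    by (simp add: power2_eq_square algebra_simps)
  hence "c * c * m + s * s * m = m" for m :: real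
    using cs by simp
  hence sum_sq_smult: "(c * c) \<cdot>\<^sub>m M + (s * s) \<cdot>\<^sub>m M = M" "(- s * - s) \<cdot>\<^sub>m M + (c * c) \<cdot>\<^sub>m M = M"
    if "M \<in> carrier_mat (2*n) (2*n)" for M :: "real mat"
    using that by (auto intro!: eq_matI simp: add.commute)
  have XJX: "X * ?J * transpose_mat X \<in> carrier_mat (2*n) (2*n)" and YJY: "Y * ?J * transpose_mat Y \<in> carrier_mat (2*n) (2*n)"
    using X Y by auto
  from symplectic_four_block_rows[OF assms(1)] X Y
  have "(c * c) \<cdot>\<^sub>m (X * ?J * transpose_mat X) + (s * s) \<cdot>\<^sub>m (X * ?J * transpose_mat X) = ?J"
    and "(- s * - s) \<cdot>\<^sub>m (Y * ?J * transpose_mat Y) + (c * c) \<cdot>\<^sub>m (Y * ?J * transpose_mat Y) = ?J"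
    by (simp_all add: smult_sandwich[of _ "2*n" "2*n"])
  thus ?thesis unfolding symplectic_def using X Y sum_sq_smult[OF XJX] sum_sq_smult[OF YJY] by simp
qed

lemma symplectic_normal_form_of_common_direction:
  fixes A B C D :: "real mat"
  assumes sympl: "symplectic (2*n) (four_block_mat A B C D)"
    and carrier: "A \<in> carrier_mat (2*n) (2*n)" "B \<in> carrier_mat (2*n) (2*n)" "C \<in> carrier_mat (2*n) (2*n)" "D \<in> carrier_mat (2*n) (2*n)"
    and pq: "p \<noteq> 0 \<or> q \<noteq> 0"
    and direction: "\<forall>i<2*n. \<forall>k<2*n. q * A $$ (i,k) = p * B $$ (i,k) \<and> p * C $$ (i,k) + q * D $$ (i,k) = 0"
  shows "\<exists>X Y \<alpha>. symplectic n X \<and> symplectic n Y \<and>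
           four_block_mat A B C D = four_block_mat X (0\<^sub>m (2*n) (2*n)) (0\<^sub>m (2*n) (2*n)) Y * mixA n \<alpha>"
proof -
  obtain c s t where cs: "c\<^sup>2 + s\<^sup>2 = 1" "0 \<le> c" "c = 0 \<longrightarrow> s = 1" and c: "c = t * p" and s: "s = t * q"
    using unit_direction[OF pq] by blast
  have "s * A $$ (i,k) = c * B $$ (i,k) \<and> c * C $$ (i,k) + s * D $$ (i,k) = 0" if "i < 2*n" "k < 2*n" for i k
  proof -
    have "s * A $$ (i,k) - c * B $$ (i,k) = t * (q * A $$ (i,k) - p * B $$ (i,k))"
      and "c * C $$ (i,k) + s * D $$ (i,k) = t * (p * C $$ (i,k) + q * D $$ (i,k))"
      unfolding c s by (simp_all add: algebra_simps)
    thus ?thesis using direction that by simp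
  qed
  then obtain X Y where X: "X \<in> carrier_mat (2*n) (2*n)" and Y: "Y \<in> carrier_mat (2*n) (2*n)"
    and S: "four_block_mat A B C D = four_block_mat (c \<cdot>\<^sub>m X) (s \<cdot>\<^sub>m X) ((- s) \<cdot>\<^sub>m Y) (c \<cdot>\<^sub>m Y)"
    using rotated_block_form[OF carrier cs(1)] by metis
  have "symplectic n X \<and> symplectic n Y"
    using symplectic_of_rotated_blocks[OF sympl[unfolded S] X Y cs(1)] .
  moreover obtain \<alpha> where
    "mixA n \<alpha> = four_block_mat (c \<cdot>\<^sub>m 1\<^sub>m (2*n)) (s \<cdot>\<^sub>m 1\<^sub>m (2*n)) ((- s) \<cdot>\<^sub>m 1\<^sub>m (2*n)) (c \<cdot>\<^sub>m 1\<^sub>m (2*n))"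
    using mixA_rotation[OF cs] by blast
  hence "four_block_mat A B C D = four_block_mat X (0\<^sub>m (2*n) (2*n)) (0\<^sub>m (2*n) (2*n)) Y * mixA n \<alpha>"
    unfolding S by (simp add: four_block_diag_mult_scalar_blocks[OF X Y])
  ultimately show ?thesis by blast
qed

theorem lemma2:
  fixes n :: nat and S :: "real mat"
  assumes "symplectic (2*n) S"
    and "\<forall>G. cov_mat n G \<longrightarrow>
           (let M = S * four_block_mat G (0\<^sub>m (2*n) (2*n)) (0\<^sub>m (2*n) (2*n)) G * transpose_mat S
            in \<forall>i j. i < 2*n \<and> 2*n \<le> j \<and> j < 4*n \<longrightarrow> M $$ (i,j) = 0 \<and> M $$ (j,i) = 0)"
  shows "(\<exists>X Y (\<alpha>::ereal). symplectic n X \<and> symplectic n Y \<and>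
            S = four_block_mat X (0\<^sub>m (2*n) (2*n)) (0\<^sub>m (2*n) (2*n)) Y * mixA n \<alpha>)
       \<or> (\<exists>X Y (\<gamma>::ereal). symplectic n X \<and> symplectic n Y \<and>
            S = four_block_mat (0\<^sub>m (2*n) (2*n)) X Y (0\<^sub>m (2*n) (2*n)) * mixB n \<gamma>)"
proof (cases "n = 0")
  case True
  have "symplectic 0 (1\<^sub>m 0)" unfolding symplectic_def by (auto intro!: eq_matI simp: sympl_form_def)
  moreover have "S = four_block_mat (1\<^sub>m 0) (0\<^sub>m 0 0) (0\<^sub>m 0 0) (1\<^sub>m 0) * mixA 0 0"
    using assms(1) True unfolding symplectic_def by (auto intro!: eq_matI simp: mixA_def zero_ereal_def)
  ultimately show ?thesis unfolding True mult_0_right by blast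
next
  case False
  obtain A B C D where split: "split_block S (2*n) (2*n) = (A, B, C, D)" by (metis prod_cases4)
  have "S \<in> carrier_mat (2*n + 2*n) (2*n + 2*n)" using assms(1) unfolding symplectic_def by simp
  note blocks = split_block[OF split, of "2*n" "2*n", simplified carrier_matD[OF this], simplified]
  have off_diagonal: "A * G * transpose_mat C + B * G * transpose_mat D = 0\<^sub>m (2*n) (2*n)" if "cov_mat n G" for G
    using off_diagonal_block_vanishes[OF blocks(1-4) assms(2)[unfolded blocks(5)] that] .
  interpret cross_vanishing_blocks "2*n" A B C D
    using cross_vanishing_blocks_of_symplectic assms(1)[unfolded blocks(5)] False blocks(1-4) off_diagonal by blast
  obtain p q where "p \<noteq> 0 \<or> q \<noteq> 0"
    and "\<forall>i<2*n. \<forall>k<2*n. q * A $$ (i,k) = p * B $$ (i,k) \<and> p * C $$ (i,k) + q * D $$ (i,k) = 0"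
    using common_direction False by auto
  from symplectic_normal_form_of_common_direction[OF assms(1)[unfolded blocks(5)] blocks(1-4) this]
  show ?thesis unfolding blocks(5) by blast
qed

end
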